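(* Let $U$ be a countably infinite universe and $\mathcal{C}=(L_1,L_2,\ldots)$ a countably infinite collection of languages over $U$, and let $\mathcal{C}(L_i)$ and $m^\star(L_i)$ be as determined by the Procedure in the context. For every $i\ge1$, $\mathcal{C}(L_i)$ is either empty, or contains at least one entry $L_j\ne L_i$ with $j<i$; furthermore, every entry $L_j\ne L_i$ of $\mathcal{C}(L_i)$ satisfies $m^\star(L_j)<m^\star(L_i)$.
   Context: A language is an infinite subset of $U$; a collection is a sequence of languages (repetitions allowed, entries distinguished by index). Procedure. Set $\mathcal{C}'_0=()$. For $i=1,2,3,\ldots$: append the entry $L_i$ at the end of $\mathcal{C}'_{i-1}$ to get $\mathcal{C}'_i=(L'_1,\ldots,L'_i)$ (a permutation of the entries $L_1,\ldots,L_i$), and set $j=i$. Repeat: (1) among all subcollections $\mathcal{D}$ of the entries $(L'_1,\ldots,L'_j)$ that include the entry $L'_j$ and satisfy $|\bigcap_{L\in\mathcal{D}}L|<\infty$, let $\mathcal{C}_{\mathrm{chk}}$ be one maximizing $|\bigcap_{L\in\mathcal{D}}L|$ and $m_{\mathrm{chk}}$ this maximum; if no such $\mathcal{D}$ exists, set $\mathcal{C}_{\mathrm{chk}}=()$, $m_{\mathrm{chk}}=0$. (2) If $j\le1$ or $m_{\mathrm{chk}}>m^\star(L'_{j-1})$ (already fixed since $L'_{j-1}$ has original index $<i$), stop the loop. (3) Otherwise swap positions $j-1$ and $j$ in $\mathcal{C}'_i$, set $j\leftarrow j-1$ and return to (1). When the loop stops, set $\mathcal{C}(L_i)=\mathcal{C}_{\mathrm{chk}}$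 and $m^\star(L_i)=m_{\mathrm{chk}}$. *)

theory Defs
  imports Main "HOL-Library.Countable_Set"
begin

text \<open>Entries of the collection are identified by their (1-based) index; the current
ordering C'_i is a list of indices. L :: nat => 'a set gives the language of each index.\<close>

definition cands :: "(nat \<Rightarrow> 'a set) \<Rightarrow> nat list \<Rightarrow> nat \<Rightarrow> nat set set" where
  "cands L xs j = {D. D \<subseteq> set (take j xs) \<and> xs ! (j - 1) \<in> D \<and> finite (\<Inter>k\<in>D. L k)}"

definition mchk :: "(nat \<Rightarrow> 'a set) \<Rightarrow> nat list \<Rightarrow> nat \<Rightarrow> nat" where
  "mchk L xs j = (if cands L xs j = {} then 0
     else Max ((\<lambda>D. card (\<Inter>k\<in>D. L k)) ` cands L xs j))"

text \<open>Ties are broken by an arbitrary selection function sel (any maximizer may be chosen).\<close>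
definition Cchk :: "(nat set set \<Rightarrow> nat set) \<Rightarrow> (nat \<Rightarrow> 'a set) \<Rightarrow> nat list \<Rightarrow> nat \<Rightarrow> nat set" where
  "Cchk sel L xs j = (if cands L xs j = {} then {}
     else sel {D \<in> cands L xs j. card (\<Inter>k\<in>D. L k) = mchk L xs j})"

definition swap_pos :: "nat list \<Rightarrow> nat \<Rightarrow> nat \<Rightarrow> nat list" where
  "swap_pos xs a b = xs[a := xs ! b, b := xs ! a]"

text \<open>The inner loop, with j the (1-based) current position of the new entry and
ms the already fixed values m* of earlier entries.\<close>
fun bubble :: "(nat set set \<Rightarrow> nat set) \<Rightarrow> (nat \<Rightarrow> 'a set) \<Rightarrow> (nat \<Rightarrow> nat)
      \<Rightarrow> nat list \<Rightarrow> nat \<Rightarrow> nat list \<times> nat set \<times> nat" where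
  "bubble sel L ms xs j =
     (if j \<le> 1 \<or> mchk L xs j > ms (xs ! (j - 2))
      then (xs, Cchk sel L xs j, mchk L xs j)
      else bubble sel L ms (swap_pos xs (j - 2) (j - 1)) (j - 1))"

text \<open>State after processing L_1..L_n: ordering, the map C(.), the map m*(.).\<close>
fun run :: "(nat set set \<Rightarrow> nat set) \<Rightarrow> (nat \<Rightarrow> 'a set) \<Rightarrow> nat
      \<Rightarrow> nat list \<times> (nat \<Rightarrow> nat set) \<times> (nat \<Rightarrow> nat)" where
  "run sel L 0 = ([], (\<lambda>_. {}), (\<lambda>_. 0))"
| "run sel L (Suc n) =
     (let (xs, C, m) = run sel L n;
          (xs', c, mm) = bubble sel L m (xs @ [Suc n]) (Suc n)
      in (xs', C(Suc n := c), m(Suc n := mm)))"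

definition procC :: "(nat set set \<Rightarrow> nat set) \<Rightarrow> (nat \<Rightarrow> 'a set) \<Rightarrow> nat \<Rightarrow> nat set" where
  "procC sel L i = fst (snd (run sel L i)) i"

definition procM :: "(nat set set \<Rightarrow> nat set) \<Rightarrow> (nat \<Rightarrow> 'a set) \<Rightarrow> nat \<Rightarrow> nat" where
  "procM sel L i = snd (snd (run sel L i)) i"

end

theory Submission
  imports Defs
begin

text \<open>The ordering kept by the procedure is always sorted by m*: the new entry L_i is
  swapped to the left only past entries whose m* is at least the current m_chk, and m_chk
  can only decrease as the set of entries in front of L_i shrinks. Hence, when the loop
  stops, every entry of the set S of entries in front of L_i has m* below m*(L_i), and
  C(L_i) is a subcollection of S together with L_i that contains L_i and has finite intersection. Since L_i is
  infinite, a nonempty C(L_i) contains some other entry, and all such entries lie in S.\<close>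

definition candidates :: "(nat \<Rightarrow> 'a set) \<Rightarrow> nat set \<Rightarrow> nat \<Rightarrow> nat set set" where
  "candidates L S i = {D. D \<subseteq> insert i S \<and> i \<in> D \<and> finite (\<Inter>k\<in>D. L k)}"

definition best_card :: "(nat \<Rightarrow> 'a set) \<Rightarrow> nat set \<Rightarrow> nat \<Rightarrow> nat" where
  "best_card L S i = (if candidates L S i = {} then 0
     else Max ((\<lambda>D. card (\<Inter>k\<in>D. L k)) ` candidates L S i))"

lemma cands_at_position: "cands L (ys @ i # zs) (Suc (length ys)) = candidates L (set ys) i"
  unfolding cands_def candidates_def by (simp add: nth_append)

lemma mchk_at_position: "mchk L (ys @ i # zs) (Suc (length ys)) = best_card L (set ys) i"
  unfolding mchk_def best_card_def cands_at_position ..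

lemma finite_candidates: "finite S \<Longrightarrow> finite (candidates L S i)"
  unfolding candidates_def by (rule finite_subset[of _ "Pow (insert i S)"]) auto

lemma best_card_mono:
  assumes "S \<subseteq> T" "finite T"
  shows "best_card L S i \<le> best_card L T i"
proof -
  have "candidates L S i \<subseteq> candidates L T i"
    using assms(1) unfolding candidates_def by auto
  then show ?thesis
    using finite_candidates[OF assms(2)] unfolding best_card_def
    by (auto intro!: Max_mono image_mono)
qed

lemma Cchk_at_position:
  assumes "\<forall>S. S \<noteq> {} \<longrightarrow> sel S \<in> S"
  shows "Cchk sel L (ys @ i # zs) (Suc (length ys)) = {}
    \<or> Cchk sel L (ys @ i # zs) (Suc (length ys)) \<in> candidates L (set ys) i"
proof (cases "candidates L (set ys) i = {}")
  case True
  then show ?thesis by (simp add: Cchk_def cands_at_position)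
next
  case False
  let ?maximizers = "{D \<in> candidates L (set ys) i. card (\<Inter>k\<in>D. L k) = best_card L (set ys) i}"
  have "best_card L (set ys) i \<in> (\<lambda>D. card (\<Inter>k\<in>D. L k)) ` candidates L (set ys) i"
    using False finite_candidates[of "set ys" L i] unfolding best_card_def by simp
  then have "?maximizers \<noteq> {}" by force
  then have "sel ?maximizers \<in> ?maximizers" by (rule assms[rule_format])
  moreover have "Cchk sel L (ys @ i # zs) (Suc (length ys)) = sel ?maximizers"
    using False unfolding Cchk_def cands_at_position mchk_at_position by (rule if_not_P)
  ultimately show ?thesis by simp
qed

lemma swap_pos_adjacent:
  "swap_pos (ys @ y # i # zs) (length ys) (Suc (length ys)) = ys @ i # y # zs"
  unfolding swap_pos_def by (simp add: nth_append list_update_append)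

declare bubble.simps[simp del]

lemma bubble_at_front:
  "bubble sel L ms (i # zs) (Suc 0) = (i # zs, Cchk sel L (i # zs) (Suc 0), best_card L {} i)"
  using mchk_at_position[where ys = "[]"] by (subst bubble.simps) simp

lemma bubble_stop_behind:
  assumes "ms y < best_card L (set (ys @ [y])) i"
  shows "bubble sel L ms (ys @ y # i # zs) (Suc (Suc (length ys))) =
    (ys @ y # i # zs, Cchk sel L (ys @ y # i # zs) (Suc (Suc (length ys))),
     best_card L (set (ys @ [y])) i)"
  using assms mchk_at_position[of L "ys @ [y]" i zs]
  by (subst bubble.simps) (simp add: nth_append)

lemma bubble_swap_behind:
  assumes "\<not> ms y < best_card L (set (ys @ [y])) i"
  shows "bubble sel L ms (ys @ y # i # zs) (Suc (Suc (length ys))) =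
    bubble sel L ms (ys @ i # y # zs) (Suc (length ys))"
  using assms mchk_at_position[of L "ys @ [y]" i zs] swap_pos_adjacent[of ys y i zs]
  by (subst bubble.simps) (simp add: nth_append)

lemma bubble_inserts_after_smaller:
  assumes "bubble sel L ms (ys @ i # zs) (Suc (length ys)) = (xs', c, mm)"
    and "sorted (map ms ys)"
  shows "\<exists>ys1 ys2. ys = ys1 @ ys2 \<and> xs' = ys1 @ i # ys2 @ zs
    \<and> c = Cchk sel L xs' (Suc (length ys1)) \<and> mm = best_card L (set ys1) i
    \<and> (\<forall>x\<in>set ys1. ms x < mm) \<and> (\<forall>y\<in>set ys2. mm \<le> ms y)"
  using assms
proof (induction ys arbitrary: zs rule: rev_induct)
  case Nil
  then show ?case using bubble_at_front[of sel L ms i zs] by auto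
next
  case (snoc y ys)
  have run: "bubble sel L ms (ys @ y # i # zs) (Suc (Suc (length ys))) = (xs', c, mm)"
    using snoc.prems(1) by simp
  have sorted: "sorted (map ms ys)" "\<forall>x\<in>set ys. ms x \<le> ms y"
    using snoc.prems(2) by (simp_all add: sorted_append)
  show ?case
  proof (cases "ms y < best_card L (set (ys @ [y])) i")
    case True
    then have "xs' = ys @ y # i # zs" "c = Cchk sel L xs' (Suc (length (ys @ [y])))"
      "mm = best_card L (set (ys @ [y])) i"
      using run bubble_stop_behind[of ms y L ys i sel zs] True by auto
    then show ?thesis
      using True sorted(2) by (intro exI[of _ "ys @ [y]"] exI[of _ "[]"]) auto
  next
    case False
    then obtain ys1 ys2 where ih: "ys = ys1 @ ys2" "xs' = ys1 @ i # ys2 @ y # zs"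
      "c = Cchk sel L xs' (Suc (length ys1))" "mm = best_card L (set ys1) i"
      "\<forall>x\<in>set ys1. ms x < mm" "\<forall>z\<in>set ys2. mm \<le> ms z"
      using snoc.IH[of "y # zs"] run bubble_swap_behind[of ms y L ys i sel zs] False sorted(1) by auto
    have "mm \<le> best_card L (set (ys @ [y])) i"
      unfolding ih(4) by (rule best_card_mono) (auto simp: ih(1))
    then have "mm \<le> ms y" using False by simp
    then show ?thesis using ih by (intro exI[of _ ys1] exI[of _ "ys2 @ [y]"]) auto
  qed
qed

lemma run_Suc_inserts:
  assumes run: "run sel L n = (xs, C, m)" and "length xs = n" and "sorted (map m xs)"
  obtains ys1 ys2 mm where "xs = ys1 @ ys2" and "mm = best_card L (set ys1) (Suc n)"
    and "run sel L (Suc n) = (ys1 @ Suc n # ys2,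
           C(Suc n := Cchk sel L (ys1 @ Suc n # ys2) (Suc (length ys1))), m(Suc n := mm))"
    and "\<forall>x\<in>set ys1. m x < mm" and "\<forall>y\<in>set ys2. mm \<le> m y"
proof -
  obtain xs' c mm where bubble: "bubble sel L m (xs @ [Suc n]) (Suc n) = (xs', c, mm)"
    using prod_cases3 by blast
  then obtain ys1 ys2 where "xs = ys1 @ ys2" "xs' = ys1 @ Suc n # ys2"
    "c = Cchk sel L xs' (Suc (length ys1))" "mm = best_card L (set ys1) (Suc n)"
    "\<forall>x\<in>set ys1. m x < mm" "\<forall>y\<in>set ys2. mm \<le> m y"
    using bubble_inserts_after_smaller[of sel L m xs "Suc n" "[]"] assms(2,3) by auto
  moreover have "run sel L (Suc n) = (xs', C(Suc n := c), m(Suc n := mm))"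
    using run bubble by simp
  ultimately show ?thesis using that by blast
qed

lemma run_invariant:
  "run sel L n = (xs, C, m) \<Longrightarrow> length xs = n \<and> set xs = {1..n} \<and> sorted (map m xs)"
proof (induction n arbitrary: xs C m)
  case 0
  then show ?case by simp
next
  case (Suc n)
  obtain xs0 C0 m0 where run: "run sel L n = (xs0, C0, m0)"
    using prod_cases3 by blast
  have inv: "length xs0 = n" "set xs0 = {1..n}" "sorted (map m0 xs0)"
    using Suc.IH[OF run] by auto
  obtain ys1 ys2 mm where split: "xs0 = ys1 @ ys2"
    and step: "run sel L (Suc n) = (ys1 @ Suc n # ys2,
           C0(Suc n := Cchk sel L (ys1 @ Suc n # ys2) (Suc (length ys1))), m0(Suc n := mm))"
    and below: "\<forall>x\<in>set ys1. m0 x < mm" and above: "\<forall>y\<in>set ys2. mm \<le> m0 y"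
    by (rule run_Suc_inserts[OF run inv(1,3)])
  have xs: "xs = ys1 @ Suc n # ys2" and m: "m = m0(Suc n := mm)"
    using step Suc.prems by auto
  have "Suc n \<notin> set xs0" using inv(2) by simp
  then have "Suc n \<notin> set ys1" "Suc n \<notin> set ys2" using split by simp_all
  then have map_m: "map m xs = map m0 ys1 @ mm # map m0 ys2"
    unfolding xs m by simp
  have "sorted (map m0 ys1 @ mm # map m0 ys2)"
  proof -
    have "sorted (map m0 ys1)" "sorted (map m0 ys2)"
      using inv(3) split by (simp_all add: sorted_append)
    moreover have "\<forall>x\<in>set ys1. \<forall>y\<in>set ys2. m0 x \<le> m0 y"
      using below above by (meson less_le_trans less_imp_le)
    ultimately show ?thesis using below above by (simp add: sorted_append less_imp_le)
  qed
  then have "sorted (map m xs)" by (simp only: map_m)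
  moreover have "length xs = Suc n" using inv(1) split xs by simp
  moreover have "set xs = {1..Suc n}"
    using inv(2) split xs by (auto simp: atLeastAtMostSuc_conv)
  ultimately show ?case by blast
qed

lemma run_Suc_other_value:
  "k \<noteq> Suc n \<Longrightarrow> snd (snd (run sel L (Suc n))) k = snd (snd (run sel L n)) k"
  by (simp split: prod.split)

lemma run_value_eq_procM:
  "1 \<le> k \<Longrightarrow> k \<le> n \<Longrightarrow> snd (snd (run sel L n)) k = procM sel L k"
proof (induction n)
  case 0
  then show ?case by simp
next
  case (Suc n)
  show ?case
  proof (cases "k = Suc n")
    case True
    then show ?thesis by (simp add: procM_def)
  next
    case False
    then show ?thesis using Suc run_Suc_other_value[OF False, of sel L] by simp
  qed
qed

lemma procC_in_candidates:
  assumes "\<forall>S. S \<noteq> {} \<longrightarrow> sel S \<in> S"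
  shows "procC sel L (Suc n) = {} \<or> (\<exists>S \<subseteq> {1..n}. procC sel L (Suc n) \<in> candidates L S (Suc n)
           \<and> (\<forall>j\<in>S. procM sel L j < procM sel L (Suc n)))"
proof -
  obtain xs C m where run: "run sel L n = (xs, C, m)"
    using prod_cases3 by blast
  have inv: "length xs = n" "set xs = {1..n}" "sorted (map m xs)"
    using run_invariant[OF run] by auto
  obtain ys1 ys2 mm where split: "xs = ys1 @ ys2" and "mm = best_card L (set ys1) (Suc n)"
    and step: "run sel L (Suc n) = (ys1 @ Suc n # ys2,
           C(Suc n := Cchk sel L (ys1 @ Suc n # ys2) (Suc (length ys1))), m(Suc n := mm))"
    and below: "\<forall>x\<in>set ys1. m x < mm" and "\<forall>y\<in>set ys2. mm \<le> m y"
    by (rule run_Suc_inserts[OF run inv(1,3)])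
  have C: "procC sel L (Suc n) = Cchk sel L (ys1 @ Suc n # ys2) (Suc (length ys1))"
    and M: "procM sel L (Suc n) = mm"
    unfolding procC_def procM_def step by simp_all
  have S: "set ys1 \<subseteq> {1..n}" using inv split by auto
  have below_procM: "\<forall>j\<in>set ys1. procM sel L j < procM sel L (Suc n)"
  proof
    fix j assume j: "j \<in> set ys1"
    then have "1 \<le> j" "j \<le> n" using S by auto
    then have "procM sel L j = m j"
      using run_value_eq_procM[of j n sel L] unfolding run by simp
    then show "procM sel L j < procM sel L (Suc n)" using below j M by simp
  qed
  from Cchk_at_position[OF assms, of L ys1 "Suc n" ys2]
  show ?thesis
  proof
    assume "Cchk sel L (ys1 @ Suc n # ys2) (Suc (length ys1)) = {}"
    then show ?thesis using C by simp
  next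
    assume "Cchk sel L (ys1 @ Suc n # ys2) (Suc (length ys1)) \<in> candidates L (set ys1) (Suc n)"
    then show ?thesis using C S below_procM by (intro disjI2 exI[of _ "set ys1"]) simp
  qed
qed

theorem mainTheorem10:
  fixes U :: "'a set" and L :: "nat \<Rightarrow> 'a set" and sel :: "nat set set \<Rightarrow> nat set"
    and i :: nat
  assumes "countable U" and "infinite U"
    and "\<forall>k\<ge>1. L k \<subseteq> U \<and> infinite (L k)"
    and "\<forall>S. S \<noteq> {} \<longrightarrow> sel S \<in> S"
    and "i \<ge> 1"
  shows "(procC sel L i = {} \<or> (\<exists>j\<in>procC sel L i. j \<noteq> i \<and> j < i))
         \<and> (\<forall>j\<in>procC sel L i. j \<noteq> i \<longrightarrow> procM sel L j < procM sel L i)"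
proof -
  obtain n where i: "i = Suc n" using assms(5) by (cases i) auto
  consider "procC sel L i = {}"
    | S where "S \<subseteq> {1..n}" "procC sel L i \<in> candidates L S i"
        "\<forall>j\<in>S. procM sel L j < procM sel L i"
    using procC_in_candidates[OF assms(4), of L n] i by blast
  then show ?thesis
  proof cases
    case 1
    then show ?thesis by simp
  next
    case (2 S)
    then have C: "procC sel L i \<subseteq> insert i S" "i \<in> procC sel L i"
      "finite (\<Inter>k\<in>procC sel L i. L k)"
      unfolding candidates_def by auto
    have "infinite (L i)" using assms(3,5) by simp
    then have "procC sel L i \<noteq> {i}" using C(3) by auto
    then obtain j where "j \<in> procC sel L i" "j \<noteq> i" using C(2) by blast
    moreover have "j \<in> S" if "j \<in> procC sel L i" "j \<noteq> i" for j using C(1) that by blast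
    ultimately show ?thesis using 2 i by fastforce
  qed
qed

end
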